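(* Let $\alpha,\beta\in\mathbb{R}$ and consider the Sharma-Mittal entropy $S_{\alpha,\beta}$ on $\mathcal{P}_n$. Then $S_{\alpha,\beta}$ is Schur-concave if $\alpha\ge 0$, and Schur-convex if $\alpha<0$ (in the latter case on the set of probability vectors with all entries strictly positive).
   Context: Let $\mathcal{P}_n=\{\mathbf{p}=(p_1,\dots,p_n): p_i\ge 0,\ \sum_i p_i=1\}$. For $\mathbf{p},\mathbf{q}\in\mathcal{P}_n$ with components sorted in non-increasing order, $\mathbf{p}\preceq\mathbf{q}$ ($\mathbf{p}$ is majorized by $\mathbf{q}$) means $\sum_{i=1}^k p_i\le\sum_{i=1}^k q_i$ for $k=1,\dots,n$ (applied to the non-increasing rearrangements). A function $\phi$ is Schur-convex if $\mathbf{p}\preceq\mathbf{q}$ implies $\phi(\mathbf{p})\le\phi(\mathbf{q})$, and Schur-concave if $-\phi$ is Schur-convex. The Sharma-Mittal entropy is $S_{\alpha,\beta}(\mathbf{p})=\frac{1}{1-\beta}\left[\left(\sum_{i=1}^n p_i^\alpha\right)^{\frac{1-\beta}{1-\alpha}}-1\right]$, with the values at $\alpha=1$ and/or $\beta=1$ defined by the corresponding limits. When $\alpha<0$ it is assumed that all $p_i>0$, so that the entropy is well-defined. *)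

theory Defs
  imports Complex_Main
begin

definition prob_vectors :: "nat \<Rightarrow> real list set" where
  "prob_vectors n = {p. length p = n \<and> (\<forall>x\<in>set p. x \<ge> 0) \<and> sum_list p = 1}"

definition pos_prob_vectors :: "nat \<Rightarrow> real list set" where
  "pos_prob_vectors n = {p \<in> prob_vectors n. \<forall>x\<in>set p. x > 0}"

definition decr_sort :: "real list \<Rightarrow> real list" where
  "decr_sort p = rev (sort p)"

definition majorized :: "real list \<Rightarrow> real list \<Rightarrow> bool" where
  "majorized p q \<longleftrightarrow> length p = length q \<and>
     (\<forall>k. 1 \<le> k \<and> k \<le> length p \<longrightarrow>
        sum_list (take k (decr_sort p)) \<le> sum_list (take k (decr_sort q)))"

definition schur_convex_on :: "real list set \<Rightarrow> (real list \<Rightarrow> real) \<Rightarrow> bool" where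
  "schur_convex_on A \<phi> \<longleftrightarrow> (\<forall>p\<in>A. \<forall>q\<in>A. majorized p q \<longrightarrow> \<phi> p \<le> \<phi> q)"

definition schur_concave_on :: "real list set \<Rightarrow> (real list \<Rightarrow> real) \<Rightarrow> bool" where
  "schur_concave_on A \<phi> \<longleftrightarrow> schur_convex_on A (\<lambda>p. - \<phi> p)"

text \<open>Shannon entropy (with 0 ln 0 = 0, since ln 0 = 0 in Isabelle).\<close>
definition shannon :: "real list \<Rightarrow> real" where
  "shannon p = - sum_list (map (\<lambda>x. x * ln x) p)"

text \<open>Sharma-Mittal entropy; the cases alpha = 1 and/or beta = 1 are the limiting
  values: alpha=beta=1 Shannon, beta=1 Renyi, alpha=1 Gaussian entropy.
  Powers are taken with powr, so 0 powr a = 0 (sum over the support).\<close>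
definition sharma_mittal :: "real \<Rightarrow> real \<Rightarrow> real list \<Rightarrow> real" where
  "sharma_mittal \<alpha> \<beta> p =
    (if \<alpha> = 1 \<and> \<beta> = 1 then shannon p
     else if \<alpha> = 1 then (exp ((1 - \<beta>) * shannon p) - 1) / (1 - \<beta>)
     else if \<beta> = 1 then ln (sum_list (map (\<lambda>x. x powr \<alpha>) p)) / (1 - \<alpha>)
     else ((sum_list (map (\<lambda>x. x powr \<alpha>) p)) powr ((1 - \<beta>) / (1 - \<alpha>)) - 1) / (1 - \<beta>))"

end

theory Submission
  imports Defs "HOL-Analysis.Convex" "HOL-Library.Multiset"
begin

(* Sharma-Mittal entropy is an increasing function of Renyi entropy:
   S\<^sub>\<alpha>\<^sub>\<beta> = \<phi>\<^sub>\<beta> \<circ> R\<^sub>\<alpha> with \<phi>\<^sub>\<beta> t = (exp ((1 - \<beta>) t) - 1) / (1 - \<beta>) and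
   R\<^sub>\<alpha> p = ln (\<Sum>i. p\<^sub>i powr \<alpha>) / (1 - \<alpha>), the Shannon entropy for \<alpha> = 1.
   By Karamata's inequality p \<mapsto> \<Sum>i. f p\<^sub>i is Schur-convex for every convex f.  Applied to
   x ln x, - x powr \<alpha> (0 \<le> \<alpha> \<le> 1), x powr \<alpha> (\<alpha> \<ge> 1) and, on positive vectors,
   x powr \<alpha> (\<alpha> < 0), and combined with the sign of 1 - \<alpha>, this makes R\<^sub>\<alpha> Schur-concave
   for \<alpha> \<ge> 0 and Schur-convex for \<alpha> < 0.
   Karamata's inequality is Abel summation against the secant slopes
   (f y\<^sub>i - f x\<^sub>i) / (y\<^sub>i - x\<^sub>i), which decrease along two decreasingly sorted
   vectors because f is convex. *)

lemma sorted_wrt_zip: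
  assumes "length xs = length ys" "sorted_wrt R xs" "sorted_wrt S ys"
  shows "sorted_wrt (\<lambda>(a, b) (a', b'). R a a' \<and> S b b') (zip xs ys)"
  using assms by (induction xs ys rule: list_induct2) (auto dest: set_zip_leftD set_zip_rightD)

lemma take_filter_eq_filter_take: "\<exists>m. take k (filter P xs) = filter P (take m xs)"
proof (induction xs arbitrary: k)
  case (Cons a xs)
  obtain m where "take (if P a then k - 1 else k) (filter P xs) = filter P (take m xs)"
    using Cons.IH by blast
  then show ?case
    by (cases k) (auto intro: exI[of _ 0] exI[of _ "Suc m"])
qed simp

lemma sum_list_map_zip_diff:
  fixes g :: "'a \<Rightarrow> 'b::ab_group_add"
  shows "length xs = length ys \<Longrightarrow>
    sum_list (map (\<lambda>(u, v). g v - g u) (zip xs ys)) = sum_list (map g ys) - sum_list (map g xs)"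
  by (induction xs ys rule: list_induct2) auto

lemma abel_sum_lower_bound:
  fixes L :: "(real \<times> real) list"
  assumes "sorted_wrt (\<ge>) (map fst L)"
    and "\<forall>c\<in>fst ` set L. m \<le> c"
    and "\<And>k. 0 \<le> sum_list (take k (map snd L))"
  shows "m * sum_list (map snd L) \<le> sum_list (map (\<lambda>(c, d). c * d) L)"
  using assms
proof (induction L arbitrary: m rule: rev_induct)
  case Nil
  then show ?case by simp
next
  case (snoc cd L)
  obtain c d where cd: "cd = (c, d)" by fastforce
  have "0 \<le> sum_list (take k (map snd L))" for k
    using snoc.prems(3)[of "min k (length L)"] by (cases "k \<le> length L") auto
  moreover have "\<forall>c'\<in>fst ` set L. c \<le> c'"
    using snoc.prems(1) cd by (auto simp: sorted_wrt_append)
  ultimately have "c * sum_list (map snd L) \<le> sum_list (map (\<lambda>(c, d). c * d) L)"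
    using snoc.prems(1) by (intro snoc.IH) (auto simp: sorted_wrt_append)
  moreover have "m * sum_list (map snd (L @ [cd])) \<le> c * sum_list (map snd (L @ [cd]))"
    using snoc.prems(2) snoc.prems(3)[of "Suc (length L)"] cd by (intro mult_right_mono) auto
  ultimately show ?case
    using cd by (simp add: distrib_left)
qed

definition secant_slope :: "(real \<Rightarrow> real) \<Rightarrow> real \<Rightarrow> real \<Rightarrow> real" where
  "secant_slope f u v = (f v - f u) / (v - u)"

lemma secant_slope_commute: "secant_slope f u v = secant_slope f v u"
  unfolding secant_slope_def by (metis minus_diff_eq minus_divide_divide)

lemma secant_slope_times_diff: "u \<noteq> v \<Longrightarrow> secant_slope f u v * (v - u) = f v - f u"
  by (simp add: secant_slope_def)

lemma convex_on_secant_slope_le: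
  assumes "convex_on I f" "x \<in> I" "y \<in> I" "x < t" "t < y"
  shows "secant_slope f x t \<le> secant_slope f x y" "secant_slope f x y \<le> secant_slope f t y"
  using convex_on_slope_le[OF assms] secant_slope_commute
  unfolding secant_slope_def by metis+

lemma convex_on_secant_slope_mono_right:
  assumes f: "convex_on I f" and I: "p \<in> I" "a \<in> I" "b \<in> I"
    and "a \<le> b" "a \<noteq> p" "b \<noteq> p"
  shows "secant_slope f p a \<le> secant_slope f p b"
proof -
  consider "a = b" | "p < a" "a < b" | "a < p" "p < b" | "a < b" "b < p"
    using assms(5-7) by linarith
  then show ?thesis
  proof cases
    case 1
    then show ?thesis by simp
  next
    case 2
    then show ?thesis using convex_on_secant_slope_le(1)[OF f I(1,3)] by blast
  next
    case 3
    then have "secant_slope f a p \<le> secant_slope f a b" "secant_slope f a b \<le> secant_slope f p b"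
      using convex_on_secant_slope_le[OF f I(2,3)] by blast+
    then show ?thesis using secant_slope_commute[of f p a] by linarith
  next
    case 4
    then have "secant_slope f a p \<le> secant_slope f b p"
      using convex_on_secant_slope_le(2)[OF f I(2,1)] by blast
    then show ?thesis using secant_slope_commute[of f p] by metis
  qed
qed

lemma convex_on_secant_slope_mono:
  assumes f: "convex_on I f" and I: "a \<in> I" "b \<in> I" "a' \<in> I" "b' \<in> I"
    and le: "a \<le> a'" "b \<le> b'" and ne: "a \<noteq> b" "a' \<noteq> b'"
  shows "secant_slope f a b \<le> secant_slope f a' b'"
proof (cases "a < b")
  case True
  have "secant_slope f a b \<le> secant_slope f a b'"
    using convex_on_secant_slope_mono_right[OF f I(1,2,4)] le ne True by simp
  also have "\<dots> = secant_slope f b' a" by (rule secant_slope_commute)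
  also have "\<dots> \<le> secant_slope f b' a'"
    using convex_on_secant_slope_mono_right[OF f I(4,1,3)] le ne True by simp
  finally show ?thesis by (simp only: secant_slope_commute[of f b'])
next
  case False
  then have "b < a" using ne by simp
  have "secant_slope f a b = secant_slope f b a" by (rule secant_slope_commute)
  also have "\<dots> \<le> secant_slope f b a'"
    using convex_on_secant_slope_mono_right[OF f I(2,1,3)] le ne \<open>b < a\<close> by simp
  also have "\<dots> = secant_slope f a' b" by (rule secant_slope_commute)
  also have "\<dots> \<le> secant_slope f a' b'"
    using convex_on_secant_slope_mono_right[OF f I(3,2,4)] le ne \<open>b < a\<close> by simp
  finally show ?thesis .
qed

lemma karamata_inequality:
  fixes f :: "real \<Rightarrow> real"
  assumes f: "convex_on I f" and I: "set x \<subseteq> I" "set y \<subseteq> I"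
    and len: "length x = length y"
    and sorted: "sorted_wrt (\<ge>) x" "sorted_wrt (\<ge>) y"
    and prefix: "\<And>k. k \<le> length x \<Longrightarrow> sum_list (take k x) \<le> sum_list (take k y)"
    and total: "sum_list x = sum_list y"
  shows "sum_list (map f x) \<le> sum_list (map f y)"
proof -
  \<comment> \<open>Pairs with \<open>u = v\<close> contribute to neither side; dropping them makes every slope meaningful.\<close>
  define P where "P = filter (\<lambda>(u, v). u \<noteq> v) (zip x y)"
  define L where "L = map (\<lambda>(u, v). (secant_slope f u v, v - u)) P"
  have gap_sum: "sum_list (map (\<lambda>(u, v). v - u) (filter (\<lambda>(u, v). u \<noteq> v) (take m (zip x y))))
      = sum_list (take m y) - sum_list (take m x)" for m
    by (subst sum_list_map_filter) (auto simp: take_zip len sum_list_map_zip_diff[where g = id, simplified])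
  have "sorted_wrt (\<ge>) (map fst L)"
  proof -
    have mem: "u \<in> I" "v \<in> I" "u \<noteq> v" if "(u, v) \<in> set P" for u v
      using that I by (auto simp: P_def dest: set_zip_leftD set_zip_rightD)
    have slope_le: "secant_slope f u' v' \<le> secant_slope f u v"
      if "(u, v) \<in> set P" "(u', v') \<in> set P" "u' \<le> u" "v' \<le> v" for u v u' v'
      using mem[OF that(1)] mem[OF that(2)] that(3,4)
      by (intro convex_on_secant_slope_mono[OF f]) auto
    have "sorted_wrt (\<lambda>(u, v) (u', v'). u' \<le> u \<and> v' \<le> v) P"
      unfolding P_def using sorted_wrt_zip[OF len sorted] by (rule sorted_wrt_filter)
    then have "sorted_wrt (\<ge>) (map (\<lambda>(u, v). secant_slope f u v) P)"
      by (rule sorted_wrt_map_mono) (auto intro: slope_le)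
    then show ?thesis by (simp add: L_def case_prod_unfold comp_def)
  qed
  \<comment> \<open>Any lower bound of the slopes will do, since the weights \<open>v - u\<close> sum to zero.\<close>
  moreover have "\<forall>c\<in>fst ` set L. Min (insert 0 (fst ` set L)) \<le> c"
    by simp
  moreover have "0 \<le> sum_list (take k (map snd L))" for k
  proof -
    obtain m where m: "take k P = filter (\<lambda>(u, v). u \<noteq> v) (take m (zip x y))"
      using take_filter_eq_filter_take unfolding P_def by blast
    have "sum_list (take k (map snd L)) = sum_list (take m y) - sum_list (take m x)"
      unfolding L_def take_map m using gap_sum by (simp add: case_prod_unfold comp_def)
    moreover have "sum_list (take m x) \<le> sum_list (take m y)"
      using prefix[of m] total len by (cases "m \<le> length x") auto
    ultimately show ?thesis by simp
  qed
  ultimately have "Min (insert 0 (fst ` set L)) * sum_list (map snd L)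
      \<le> sum_list (map (\<lambda>(c, d). c * d) L)"
    by (rule abel_sum_lower_bound)
  moreover have "sum_list (map snd L) = 0"
    using gap_sum[of "length x"] total len by (simp add: L_def P_def case_prod_unfold comp_def)
  ultimately have "0 \<le> sum_list (map (\<lambda>(c, d). c * d) L)"
    by (metis mult_zero_right)
  also have "map (\<lambda>(c, d). c * d) L = map (\<lambda>(u, v). f v - f u) P"
    unfolding L_def map_map by (rule map_cong) (auto simp: P_def secant_slope_times_diff)
  also have "sum_list \<dots> = sum_list (map (\<lambda>(u, v). f v - f u) (zip x y))"
    unfolding P_def by (rule sum_list_map_filter) auto
  also have "\<dots> = sum_list (map f y) - sum_list (map f x)"
    by (rule sum_list_map_zip_diff[OF len])
  finally show ?thesis by simp
qed

lemma sum_list_map_decr_sort: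
  fixes f :: "real \<Rightarrow> 'a::comm_monoid_add"
  shows "sum_list (map f (decr_sort p)) = sum_list (map f p)"
  unfolding decr_sort_def by (metis mset_map mset_rev mset_sort sum_mset_sum_list)

lemma sorted_decr_sort: "sorted_wrt (\<ge>) (decr_sort p)"
  unfolding decr_sort_def by (simp add: sorted_wrt_rev)

lemma majorized_sum_list_convex_le:
  fixes f :: "real \<Rightarrow> real"
  assumes f: "convex_on I f" and I: "set p \<subseteq> I" "set q \<subseteq> I"
    and maj: "majorized p q" and total: "sum_list p = sum_list q"
  shows "sum_list (map f p) \<le> sum_list (map f q)"
proof -
  have "sum_list (map f (decr_sort p)) \<le> sum_list (map f (decr_sort q))"
  proof (rule karamata_inequality[OF f])
    show "set (decr_sort p) \<subseteq> I" "set (decr_sort q) \<subseteq> I"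
      using I by (simp_all add: decr_sort_def)
    show "length (decr_sort p) = length (decr_sort q)"
      using maj by (simp add: majorized_def decr_sort_def)
    show "sum_list (take k (decr_sort p)) \<le> sum_list (take k (decr_sort q))"
      if "k \<le> length (decr_sort p)" for k
      using maj that by (cases "k = 0") (auto simp: majorized_def decr_sort_def)
    show "sum_list (decr_sort p) = sum_list (decr_sort q)"
      using sum_list_map_decr_sort[of id] total by simp
  qed (rule sorted_decr_sort)+
  then show ?thesis by (simp add: sum_list_map_decr_sort)
qed

lemma convex_on_atLeast_0I:
  fixes f :: "real \<Rightarrow> real"
  assumes convex: "convex_on {0<..} f"
    and at_0: "\<And>x t. 0 < x \<Longrightarrow> 0 < t \<Longrightarrow> t < 1 \<Longrightarrow> f (t * x) \<le> t * f x + (1 - t) * f 0"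
  shows "convex_on {0..} f"
proof (rule convex_on_linorderI)
  fix t x y :: real
  assume t: "0 < t" "t < 1" and xy: "x \<in> {0..}" "y \<in> {0..}" "x < y"
  show "f ((1 - t) *\<^sub>R x + t *\<^sub>R y) \<le> (1 - t) * f x + t * f y"
  proof (cases "x = 0")
    case True
    then show ?thesis using at_0[of y t] t xy by (simp add: algebra_simps)
  next
    case False
    then show ?thesis using convex_onD[OF convex, of t x y] t xy by simp
  qed
qed simp

lemma convex_on_powr_ge_1:
  assumes "1 \<le> a"
  shows "convex_on {0..} (\<lambda>x::real. x powr a)"
proof (rule convex_on_atLeast_0I)
  show "convex_on {0<..} (\<lambda>x::real. x powr a)"
    using assms by (rule powr_convex)
  fix x t :: real
  assume "0 < x" "0 < t" "t < 1"
  then have "t powr a * x powr a \<le> t * x powr a"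
    using powr_mono'[of 1 a t] assms by (intro mult_right_mono) auto
  then show "(t * x) powr a \<le> t * x powr a + (1 - t) * 0 powr a"
    using \<open>0 < x\<close> \<open>0 < t\<close> by (simp add: powr_mult)
qed

lemma concave_on_powr_le_1:
  assumes "0 \<le> a" "a \<le> 1"
  shows "concave_on {0..} (\<lambda>x::real. x powr a)"
  unfolding concave_on_def
proof (rule convex_on_atLeast_0I)
  have "concave_on {0<..} (\<lambda>x::real. x powr a)"
  proof (rule f''_le0_imp_concave)
    fix x :: real
    assume "x \<in> {0<..}"
    then show "((\<lambda>x. x powr a) has_real_derivative a * x powr (a - 1)) (at x)"
      and "((\<lambda>x. a * x powr (a - 1)) has_real_derivative a * ((a - 1) * x powr (a - 1 - 1))) (at x)"
      by (auto intro!: derivative_eq_intros)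
    show "a * ((a - 1) * x powr (a - 1 - 1)) \<le> 0"
      using assms by (intro mult_nonneg_nonpos mult_nonpos_nonneg) auto
  qed simp
  then show "convex_on {0<..} (\<lambda>x::real. - (x powr a))"
    by (simp add: concave_on_def)
  fix x t :: real
  assume "0 < x" "0 < t" "t < 1"
  then have "t * x powr a \<le> t powr a * x powr a"
    using powr_mono'[of a 1 t] assms by (intro mult_right_mono) auto
  then show "- ((t * x) powr a) \<le> t * - (x powr a) + (1 - t) * - (0 powr a)"
    using \<open>0 < x\<close> \<open>0 < t\<close> by (simp add: powr_mult)
qed

lemma convex_on_powr_le_0:
  assumes "a \<le> 0"
  shows "convex_on {0<..} (\<lambda>x::real. x powr a)"
proof (rule f''_ge0_imp_convex)
  fix x :: real
  assume "x \<in> {0<..}"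
  then show "((\<lambda>x. x powr a) has_real_derivative a * x powr (a - 1)) (at x)"
    and "((\<lambda>x. a * x powr (a - 1)) has_real_derivative a * ((a - 1) * x powr (a - 1 - 1))) (at x)"
    by (auto intro!: derivative_eq_intros)
  show "0 \<le> a * ((a - 1) * x powr (a - 1 - 1))"
    using assms by (intro mult_nonpos_nonpos mult_nonpos_nonneg) auto
qed simp

lemma convex_on_x_ln_x: "convex_on {0..} (\<lambda>x::real. x * ln x)"
proof (rule convex_on_atLeast_0I)
  show "convex_on {0<..} (\<lambda>x::real. x * ln x)"
  proof (rule f''_ge0_imp_convex)
    fix x :: real
    assume "x \<in> {0<..}"
    then show "((\<lambda>x. x * ln x) has_real_derivative ln x + 1) (at x)"
      and "((\<lambda>x. ln x + 1) has_real_derivative 1 / x) (at x)"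
      by (auto intro!: derivative_eq_intros)
    show "0 \<le> 1 / x"
      using \<open>x \<in> {0<..}\<close> by simp
  qed simp
  fix x t :: real
  assume "0 < x" "0 < t" "t < 1"
  then have "t * x * ln t \<le> 0"
    by (intro mult_nonneg_nonpos) auto
  then show "t * x * ln (t * x) \<le> t * (x * ln x) + (1 - t) * (0 * ln 0)"
    using \<open>0 < x\<close> \<open>0 < t\<close> by (simp add: ln_mult algebra_simps)
qed

lemma prob_vector_sum_list_powr_pos:
  assumes "p \<in> prob_vectors n"
  shows "0 < sum_list (map (\<lambda>x. x powr a) p)"
proof -
  have nonneg: "\<forall>x\<in>set p. 0 \<le> x" and "sum_list p \<noteq> 0"
    using assms by (auto simp: prob_vectors_def)
  then obtain x where x: "x \<in> set p" "x \<noteq> 0"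
    by (metis sum_list_nonneg_eq_0_iff)
  then have "0 < x powr a"
    using nonneg by simp
  also have "\<dots> \<le> sum_list (map (\<lambda>x. x powr a) p)"
    using x by (intro member_le_sum_list) auto
  finally show ?thesis .
qed

lemma schur_convex_on_cong:
  "(\<And>p. p \<in> A \<Longrightarrow> f p = g p) \<Longrightarrow> schur_convex_on A f \<longleftrightarrow> schur_convex_on A g"
  by (simp add: schur_convex_on_def)

lemma schur_concave_on_cong:
  "(\<And>p. p \<in> A \<Longrightarrow> f p = g p) \<Longrightarrow> schur_concave_on A f \<longleftrightarrow> schur_concave_on A g"
  by (simp add: schur_concave_on_def schur_convex_on_def)

lemma schur_convex_on_mono_comp:
  "schur_convex_on A f \<Longrightarrow> mono g \<Longrightarrow> schur_convex_on A (\<lambda>p. g (f p))"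
  by (simp add: schur_convex_on_def monoD)

lemma schur_concave_on_mono_comp:
  "schur_concave_on A f \<Longrightarrow> mono g \<Longrightarrow> schur_concave_on A (\<lambda>p. g (f p))"
  by (simp add: schur_concave_on_def schur_convex_on_def monoD)

definition renyi :: "real \<Rightarrow> real list \<Rightarrow> real" where
  "renyi \<alpha> p = (if \<alpha> = 1 then shannon p else ln (sum_list (map (\<lambda>x. x powr \<alpha>) p)) / (1 - \<alpha>))"

definition sm_exp :: "real \<Rightarrow> real \<Rightarrow> real" where
  "sm_exp \<beta> t = (if \<beta> = 1 then t else (exp ((1 - \<beta>) * t) - 1) / (1 - \<beta>))"

lemma mono_sm_exp: "mono (sm_exp \<beta>)"
proof (rule monoI)
  fix s t :: real
  assume "s \<le> t"
  consider "\<beta> = 1" | "\<beta> < 1" | "1 < \<beta>" by linarith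
  then show "sm_exp \<beta> s \<le> sm_exp \<beta> t"
  proof cases
    case 1
    then show ?thesis using \<open>s \<le> t\<close> by (simp add: sm_exp_def)
  next
    case 2
    then have "exp ((1 - \<beta>) * s) \<le> exp ((1 - \<beta>) * t)"
      using \<open>s \<le> t\<close> by (simp add: mult_left_mono)
    then show ?thesis using 2 by (simp add: sm_exp_def divide_right_mono)
  next
    case 3
    then have "exp ((1 - \<beta>) * t) \<le> exp ((1 - \<beta>) * s)"
      using \<open>s \<le> t\<close> by (simp add: mult_left_mono_neg)
    then show ?thesis using 3 by (simp add: sm_exp_def divide_right_mono_neg)
  qed
qed

lemma sharma_mittal_eq_sm_exp_renyi:
  assumes "0 < sum_list (map (\<lambda>x. x powr \<alpha>) p)"
  shows "sharma_mittal \<alpha> \<beta> p = sm_exp \<beta> (renyi \<alpha> p)"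
proof -
  let ?s = "sum_list (map (\<lambda>x. x powr \<alpha>) p)"
  have "?s powr ((1 - \<beta>) / (1 - \<alpha>)) = exp ((1 - \<beta>) * (ln ?s / (1 - \<alpha>)))"
    using assms by (simp add: powr_def)
  then show ?thesis
    by (simp add: sharma_mittal_def sm_exp_def renyi_def)
qed

lemma schur_concave_on_renyi:
  assumes "0 \<le> \<alpha>"
  shows "schur_concave_on (prob_vectors n) (renyi \<alpha>)"
  unfolding schur_concave_on_def schur_convex_on_def
proof (intro ballI impI)
  fix p q
  assume p: "p \<in> prob_vectors n" and q: "q \<in> prob_vectors n" and maj: "majorized p q"
  have I: "set p \<subseteq> {0..}" "set q \<subseteq> {0..}" and total: "sum_list p = sum_list q"
    using p q by (auto simp: prob_vectors_def)
  define S where "S r = sum_list (map (\<lambda>x. x powr \<alpha>) r)" for r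
  have S_pos: "0 < S p" "0 < S q"
    using p q unfolding S_def by (auto intro: prob_vector_sum_list_powr_pos)
  consider "\<alpha> = 1" | "\<alpha> < 1" | "1 < \<alpha>" by linarith
  then have "renyi \<alpha> q \<le> renyi \<alpha> p"
  proof cases
    case 1
    have "sum_list (map (\<lambda>x. x * ln x) p) \<le> sum_list (map (\<lambda>x. x * ln x) q)"
      using majorized_sum_list_convex_le[OF convex_on_x_ln_x I maj total] .
    then show ?thesis using 1 by (simp add: renyi_def shannon_def)
  next
    case 2
    have "- S p \<le> - S q"
      using majorized_sum_list_convex_le[OF concave_on_powr_le_1[unfolded concave_on_def] I maj total] assms 2
      by (simp add: S_def uminus_sum_list_map o_def)
    then have "S q \<le> S p"
      by simp
    then show ?thesis
      using 2 S_pos by (simp add: renyi_def flip: S_def) (intro divide_right_mono; simp)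
  next
    case 3
    have "S p \<le> S q"
      using majorized_sum_list_convex_le[OF convex_on_powr_ge_1 I maj total] 3 by (simp add: S_def)
    then show ?thesis
      using 3 S_pos by (simp add: renyi_def flip: S_def) (intro divide_right_mono_neg; simp)
  qed
  then show "- renyi \<alpha> p \<le> - renyi \<alpha> q" by simp
qed

lemma schur_convex_on_renyi:
  assumes "\<alpha> < 0"
  shows "schur_convex_on (pos_prob_vectors n) (renyi \<alpha>)"
  unfolding schur_convex_on_def
proof (intro ballI impI)
  fix p q
  assume p: "p \<in> pos_prob_vectors n" and q: "q \<in> pos_prob_vectors n" and maj: "majorized p q"
  have I: "set p \<subseteq> {0<..}" "set q \<subseteq> {0<..}" and total: "sum_list p = sum_list q"
    using p q by (auto simp: pos_prob_vectors_def prob_vectors_def)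
  define S where "S r = sum_list (map (\<lambda>x. x powr \<alpha>) r)" for r
  have "0 < S p"
    using p unfolding S_def pos_prob_vectors_def by (auto intro: prob_vector_sum_list_powr_pos)
  moreover have "S p \<le> S q"
    using majorized_sum_list_convex_le[OF convex_on_powr_le_0 I maj total] assms by (simp add: S_def)
  ultimately show "renyi \<alpha> p \<le> renyi \<alpha> q"
    using assms by (simp add: renyi_def flip: S_def) (intro divide_right_mono; simp)
qed

theorem lemma1:
  fixes \<alpha> \<beta> :: real and n :: nat
  shows "(\<alpha> \<ge> 0 \<longrightarrow> schur_concave_on (prob_vectors n) (sharma_mittal \<alpha> \<beta>)) \<and>
         (\<alpha> < 0 \<longrightarrow> schur_convex_on (pos_prob_vectors n) (sharma_mittal \<alpha> \<beta>))"
proof -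
  have sharma_mittal_eq: "sharma_mittal \<alpha> \<beta> p = sm_exp \<beta> (renyi \<alpha> p)" if "p \<in> prob_vectors n" for p
    using that by (intro sharma_mittal_eq_sm_exp_renyi prob_vector_sum_list_powr_pos)
  have "schur_concave_on (prob_vectors n) (sharma_mittal \<alpha> \<beta>)" if "0 \<le> \<alpha>"
    using schur_concave_on_mono_comp[OF schur_concave_on_renyi[OF that] mono_sm_exp]
    by (subst schur_concave_on_cong[OF sharma_mittal_eq])
  moreover have "schur_convex_on (pos_prob_vectors n) (sharma_mittal \<alpha> \<beta>)" if "\<alpha> < 0"
    using schur_convex_on_mono_comp[OF schur_convex_on_renyi[OF that] mono_sm_exp]
    by (subst schur_convex_on_cong[OF sharma_mittal_eq]) (auto simp: pos_prob_vectors_def)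
  ultimately show ?thesis by blast
qed

end
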